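(* For all $x\in R(E)$, $u\in R(F,H)$ and $v\in W(F,H)$, \[ x\bullet(uv)=(x\bullet u)v . \]
   Context: Let $f\in\mathbb{C}[H]$ be a polynomial. $R=R(f)$ is the associative $\mathbb{C}$-algebra generated by $E,F,H$ with relations $EF-FE=f(H)$, $HE-EH=E$, $HF-FH=-F$; the monomials $F^iH^jE^k$ form a basis of $R$. $Z(R)$ is the center of $R$. Let $R(E)=\mathbb{C}[E]$ and $R(F,H)$ the subalgebra generated by $F,H$. Fix an algebra homomorphism $\eta:R(E)\to\mathbb{C}$ with $\eta(E)\neq0$ and let $R_\eta(E)=\ker\eta$. Then $R=R(F,H)\oplus R\,R_\eta(E)$ as vector spaces; for $u\in R$, $u^\eta$ denotes its $R(F,H)$-component. $W(F,H)=\{z^\eta: z\in Z(R)\}$. The $\eta$-reduced action of $R(E)$ on $R(F,H)$ is $x\bullet v=(xv)^\eta-\eta(x)v$ for $x\in R(E)$, $v\in R(F,H)$. *)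

theory Defs
  imports "HOL-Computational_Algebra.Polynomial"
begin

text \<open>The algebra R(f) is modelled by an arbitrary ring 'a together with a central
ring embedding sc of the complex scalars and elements E, F, H satisfying the defining
relations and such that the monomials F^i H^j E^k form a C-basis.  Any such algebra
is isomorphic to R(f).\<close>

definition lin_span :: "(complex \<Rightarrow> 'a::ring_1) \<Rightarrow> 'a set \<Rightarrow> 'a set" where
  "lin_span sc S = {\<Sum>i<n. sc (c i) * b i | (n::nat) c b. \<forall>i<n. b i \<in> S}"

definition poly_eval :: "(complex \<Rightarrow> 'a::ring_1) \<Rightarrow> complex poly \<Rightarrow> 'a \<Rightarrow> 'a" where
  "poly_eval sc p x = (\<Sum>i\<le>degree p. sc (coeff p i) * x ^ i)"

definition monoFHE :: "'a::ring_1 \<Rightarrow> 'a \<Rightarrow> 'a \<Rightarrow> nat \<times> nat \<times> nat \<Rightarrow> 'a" where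
  "monoFHE E F H t = (case t of (i, j, k) \<Rightarrow> F ^ i * H ^ j * E ^ k)"

definition is_Rf :: "(complex \<Rightarrow> 'a::ring_1) \<Rightarrow> complex poly \<Rightarrow> 'a \<Rightarrow> 'a \<Rightarrow> 'a \<Rightarrow> bool" where
  "is_Rf sc f E F H \<longleftrightarrow>
     sc 1 = 1 \<and> (\<forall>a b. sc (a + b) = sc a + sc b) \<and> (\<forall>a b. sc (a * b) = sc a * sc b) \<and>
     (\<forall>a x. sc a * x = x * sc a) \<and>
     E * F - F * E = poly_eval sc f H \<and> H * E - E * H = E \<and> H * F - F * H = - F \<and>
     (\<forall>(n::nat) c t. inj_on t {..<n} \<longrightarrow> (\<Sum>i<n. sc (c i) * monoFHE E F H (t i)) = 0
         \<longrightarrow> (\<forall>i<n. c i = 0)) \<and>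
     (\<forall>u. u \<in> lin_span sc (range (monoFHE E F H)))"

inductive_set gen_subalg :: "(complex \<Rightarrow> 'a::ring_1) \<Rightarrow> 'a set \<Rightarrow> 'a set"
  for sc :: "complex \<Rightarrow> 'a" and S :: "'a set" where
  gen_scalar: "sc c \<in> gen_subalg sc S"
| gen_base: "x \<in> S \<Longrightarrow> x \<in> gen_subalg sc S"
| gen_add: "x \<in> gen_subalg sc S \<Longrightarrow> y \<in> gen_subalg sc S \<Longrightarrow> x + y \<in> gen_subalg sc S"
| gen_mult: "x \<in> gen_subalg sc S \<Longrightarrow> y \<in> gen_subalg sc S \<Longrightarrow> x * y \<in> gen_subalg sc S"

definition center :: "'a::ring_1 set" where
  "center = {z. \<forall>y. z * y = y * z}"

definition RE :: "(complex \<Rightarrow> 'a::ring_1) \<Rightarrow> 'a \<Rightarrow> 'a set" where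
  "RE sc E = {poly_eval sc p E | p. True}"

definition RFH :: "(complex \<Rightarrow> 'a::ring_1) \<Rightarrow> 'a \<Rightarrow> 'a \<Rightarrow> 'a set" where
  "RFH sc F H = gen_subalg sc {F, H}"

definition is_eta :: "(complex \<Rightarrow> 'a::ring_1) \<Rightarrow> 'a \<Rightarrow> ('a \<Rightarrow> complex) \<Rightarrow> bool" where
  "is_eta sc E \<eta> \<longleftrightarrow>
     (\<forall>c. \<eta> (sc c) = c) \<and>
     (\<forall>x\<in>RE sc E. \<forall>y\<in>RE sc E. \<eta> (x + y) = \<eta> x + \<eta> y \<and> \<eta> (x * y) = \<eta> x * \<eta> y)"

definition RetaE :: "(complex \<Rightarrow> 'a::ring_1) \<Rightarrow> 'a \<Rightarrow> ('a \<Rightarrow> complex) \<Rightarrow> 'a set" where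
  "RetaE sc E \<eta> = {x \<in> RE sc E. \<eta> x = 0}"

definition R_RetaE :: "(complex \<Rightarrow> 'a::ring_1) \<Rightarrow> 'a \<Rightarrow> ('a \<Rightarrow> complex) \<Rightarrow> 'a set" where
  "R_RetaE sc E \<eta> = {\<Sum>i<n. r i * y i | (n::nat) r y. \<forall>i<n. y i \<in> RetaE sc E \<eta>}"

text \<open>u^eta: the R(F,H)-component of u in R = R(F,H) \<oplus> R R_eta(E).\<close>
definition eta_part :: "(complex \<Rightarrow> 'a::ring_1) \<Rightarrow> 'a \<Rightarrow> 'a \<Rightarrow> 'a \<Rightarrow> ('a \<Rightarrow> complex) \<Rightarrow> 'a \<Rightarrow> 'a" where
  "eta_part sc E F H \<eta> u = (THE v. v \<in> RFH sc F H \<and> u - v \<in> R_RetaE sc E \<eta>)"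

definition W_FH :: "(complex \<Rightarrow> 'a::ring_1) \<Rightarrow> 'a \<Rightarrow> 'a \<Rightarrow> 'a \<Rightarrow> ('a \<Rightarrow> complex) \<Rightarrow> 'a set" where
  "W_FH sc E F H \<eta> = {eta_part sc E F H \<eta> z | z. z \<in> center}"

definition eta_act :: "(complex \<Rightarrow> 'a::ring_1) \<Rightarrow> 'a \<Rightarrow> 'a \<Rightarrow> 'a \<Rightarrow> ('a \<Rightarrow> complex) \<Rightarrow> 'a \<Rightarrow> 'a \<Rightarrow> 'a" where
  "eta_act sc E F H \<eta> x v = eta_part sc E F H \<eta> (x * v) - sc (\<eta> x) * v"

end

theory Submission
  imports Defs
begin

(* Put e = eta(E) and let eps (eval_E e below) be the C-linear map of R sending the PBW
   monomial F^i H^j E^k to e^k F^i H^j.  Under eps, right multiplication by p(E) becomes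
   multiplication by the scalar p(e), so eps kills the left ideal R R_eta(E); eps commutes with
   left multiplication by F and H, hence by all of R(F,H), and therefore fixes R(F,H); and
   u - eps(u) lies in R R_eta(E).  So eps(u) = u^eta.  Checking on monomials also gives
   eps(r eps(y)) = eps(r y).  For z central, v = eps(z) and a' = eps(a) this yields
     eps(a v) = eps(a z) = eps(z a') = eps(a' z) = eps(a' v) = a' v,
   i.e. (a v)^eta = a^eta v, and a = x u gives the theorem. *)

definition sc_linear :: "(complex \<Rightarrow> 'a::ring_1) \<Rightarrow> ('a \<Rightarrow> 'a) \<Rightarrow> bool" where
  "sc_linear sc \<phi> \<longleftrightarrow> (\<forall>u v. \<phi> (u + v) = \<phi> u + \<phi> v) \<and> (\<forall>a u. \<phi> (sc a * u) = sc a * \<phi> u)"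

lemma sc_linear_add: "sc_linear sc \<phi> \<Longrightarrow> \<phi> (u + v) = \<phi> u + \<phi> v"
  and sc_linear_scale: "sc_linear sc \<phi> \<Longrightarrow> \<phi> (sc a * u) = sc a * \<phi> u"
  unfolding sc_linear_def by blast+

lemma sc_linear_zero: "sc_linear sc \<phi> \<Longrightarrow> \<phi> 0 = 0"
  using sc_linear_add[of sc \<phi> 0 0] by simp

lemma sc_linear_diff: "sc_linear sc \<phi> \<Longrightarrow> \<phi> (u - v) = \<phi> u - \<phi> v"
  using sc_linear_add[of sc \<phi> "u - v" v] by (simp add: algebra_simps)

lemma sc_linear_comp: "sc_linear sc \<phi> \<Longrightarrow> sc_linear sc \<psi> \<Longrightarrow> sc_linear sc (\<lambda>u. \<phi> (\<psi> u))"
  by (simp add: sc_linear_def)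

lemma sc_linear_mult_right: "sc_linear sc (\<lambda>u. u * y)"
  by (simp add: sc_linear_def distrib_right mult.assoc)

lemma sc_linear_sum:
  assumes "sc_linear sc \<phi>"
  shows "\<phi> (\<Sum>i\<in>A. y i) = (\<Sum>i\<in>A. \<phi> (y i))"
  using sc_linear_zero[OF assms] sc_linear_add[OF assms]
  by (induction A rule: infinite_finite_induct) simp_all

lemma lin_span_induct:
  assumes "u \<in> lin_span sc S" and "P 0"
    and step: "\<And>a y u. y \<in> S \<Longrightarrow> P u \<Longrightarrow> P (sc a * y + u)"
  shows "P u"
proof -
  obtain n :: nat and c y where u: "u = (\<Sum>i<n. sc (c i) * y i)" and y: "\<forall>i<n. y i \<in> S"
    using assms(1) unfolding lin_span_def by auto
  have "P (\<Sum>i<m. sc (c i) * y i)" if "m \<le> n" for m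
    using that by (induction m) (simp_all add: \<open>P 0\<close> y step add.commute)
  then show ?thesis
    unfolding u by simp
qed

lemma sc_linear_eq_on_lin_span:
  assumes "sc_linear sc \<phi>" "sc_linear sc \<psi>" "\<And>y. y \<in> S \<Longrightarrow> \<phi> y = \<psi> y"
    and "u \<in> lin_span sc S"
  shows "\<phi> u = \<psi> u"
  using assms(4)
proof (rule lin_span_induct[where P = "\<lambda>u. \<phi> u = \<psi> u"])
  show "\<phi> 0 = \<psi> 0"
    using sc_linear_zero assms(1,2) by metis
  show "\<phi> (sc a * y + u) = \<psi> (sc a * y + u)" if "y \<in> S" "\<phi> u = \<psi> u" for a y u
    using that assms(1-3) by (simp add: sc_linear_add sc_linear_scale)
qed

locale Rf_algebra =
  fixes sc :: "complex \<Rightarrow> 'a::ring_1" and f :: "complex poly" and E F H :: 'a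
  assumes Rf: "is_Rf sc f E F H"
begin

abbreviation pbw :: "nat \<times> nat \<times> nat \<Rightarrow> 'a" where
  "pbw \<equiv> monoFHE E F H"

lemma sc_1: "sc 1 = 1"
  and sc_add: "sc (a + b) = sc a + sc b"
  and sc_mult: "sc (a * b) = sc a * sc b"
  and sc_commute: "sc a * x = x * sc a"
  and H_F_commutator: "H * F - F * H = - F"
  and pbw_independent:
    "inj_on t {..<n::nat} \<Longrightarrow> (\<Sum>i<n. sc (c i) * pbw (t i)) = 0 \<Longrightarrow> i < n \<Longrightarrow> c i = 0"
  and pbw_spanning: "u \<in> lin_span sc (range pbw)"
  using Rf unfolding is_Rf_def by blast+

lemma sc_0: "sc 0 = 0"
  using sc_add[of 0 0] by simp

lemma sc_diff: "sc (a - b) = sc a - sc b"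
  using sc_add[of "a - b" b] by (simp add: algebra_simps)

lemma sc_minus: "sc (- a) = - sc a"
  using sc_diff[of 0 a] by (simp add: sc_0)

lemma sc_of_nat: "sc (of_nat n) = of_nat n"
  by (induction n) (simp_all add: sc_0 sc_1 sc_add)

lemma sc_sum: "sc (\<Sum>i\<in>A. c i) = (\<Sum>i\<in>A. sc (c i))"
  by (induction A rule: infinite_finite_induct) (simp_all add: sc_0 sc_add)

lemma sc_left_commute: "sc a * (sc b * x) = sc b * (sc a * x)"
  by (metis mult.assoc mult.commute sc_mult)

lemma mult_sc_left_commute: "x * (sc a * y) = sc a * (x * y)"
  by (metis mult.assoc sc_commute)

lemma sc_linear_mult_left: "sc_linear sc (\<lambda>u. x * u)"
  unfolding sc_linear_def by (simp add: distrib_left mult_sc_left_commute)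

lemma poly_eval_degree_le:
  "degree p \<le> N \<Longrightarrow> poly_eval sc p x = (\<Sum>i\<le>N. sc (coeff p i) * x ^ i)"
  unfolding poly_eval_def by (rule sum.mono_neutral_left) (auto simp: coeff_eq_0 sc_0)

lemma poly_eval_add: "poly_eval sc (p + q) x = poly_eval sc p x + poly_eval sc q x"
proof -
  let ?N = "max (degree p) (degree q)"
  have "degree (p + q) \<le> ?N"
    by (rule degree_add_le) simp_all
  then show ?thesis
    by (simp add: poly_eval_degree_le[of _ ?N] sc_add distrib_right sum.distrib)
qed

lemma poly_eval_monom: "poly_eval sc (monom c n) x = sc c * x ^ n"
proof -
  have "sc (coeff (monom c n) i) * x ^ i = (if i = n then sc c * x ^ n else 0)" for i
    by (simp add: coeff_monom sc_0)
  then show ?thesis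
    by (simp add: poly_eval_degree_le[OF degree_monom_le])
qed

lemma pbw_induct:
  assumes "P 0" and "\<And>a t u. P u \<Longrightarrow> P (sc a * pbw t + u)"
  shows "P u"
  using pbw_spanning by (rule lin_span_induct) (use assms in auto)

lemma sc_linear_eq_on_pbw:
  assumes "sc_linear sc \<phi>" "sc_linear sc \<psi>" "\<And>t. \<phi> (pbw t) = \<psi> (pbw t)"
  shows "\<phi> u = \<psi> u"
  by (rule sc_linear_eq_on_lin_span[OF assms(1,2) _ pbw_spanning]) (use assms(3) in auto)

definition has_coords :: "(nat \<times> nat \<times> nat \<Rightarrow> complex) \<Rightarrow> 'a \<Rightarrow> bool" where
  "has_coords c u \<longleftrightarrow> finite {t. c t \<noteq> 0} \<and> u = (\<Sum>t | c t \<noteq> 0. sc (c t) * pbw t)"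

lemma sum_coords_superset:
  assumes "finite T" "{t. c t \<noteq> 0} \<subseteq> T"
  shows "(\<Sum>t | c t \<noteq> 0. sc (c t) * w t) = (\<Sum>t\<in>T. sc (c t) * w t)"
  by (rule sum.mono_neutral_left) (use assms in \<open>auto simp: sc_0\<close>)

lemma has_coordsI:
  assumes "finite T" "{t. c t \<noteq> 0} \<subseteq> T" "u = (\<Sum>t\<in>T. sc (c t) * pbw t)"
  shows "has_coords c u"
  using finite_subset[OF assms(2,1)] sum_coords_superset[OF assms(1,2)] assms(3)
  unfolding has_coords_def by simp

lemma has_coords_superset:
  assumes "has_coords c u" "finite T" "{t. c t \<noteq> 0} \<subseteq> T"
  shows "u = (\<Sum>t\<in>T. sc (c t) * pbw t)"
  using assms(1) sum_coords_superset[OF assms(2,3)] unfolding has_coords_def by simp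

lemma pbw_sum_eq_0_imp:
  assumes "finite T" "(\<Sum>t\<in>T. sc (c t) * pbw t) = 0" "t \<in> T"
  shows "c t = 0"
proof -
  obtain g where g: "bij_betw g {..<card T} T"
    using ex_bij_betw_nat_finite[OF assms(1)] by (auto simp: atLeast0LessThan)
  then have "(\<Sum>i<card T. sc (c (g i)) * pbw (g i)) = 0"
    using assms(2) sum.reindex_bij_betw[OF g, of "\<lambda>t. sc (c t) * pbw t"] by simp
  moreover have "t \<in> g ` {..<card T}" and inj: "inj_on g {..<card T}"
    using g assms(3) by (simp_all add: bij_betw_def)
  then obtain i where "i < card T" "g i = t"
    by blast
  ultimately have "(c \<circ> g) i = 0"
    by (intro pbw_independent[OF inj]) (simp_all add: comp_def)
  then show ?thesis
    using \<open>g i = t\<close> by simp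
qed

lemma has_coords_unique:
  assumes "has_coords c u" "has_coords d u"
  shows "c = d"
proof
  fix t
  let ?T = "{t. c t \<noteq> 0} \<union> {t. d t \<noteq> 0}"
  have fin: "finite ?T"
    using assms by (simp add: has_coords_def)
  have "(\<Sum>s\<in>?T. sc (c s - d s) * pbw s) = u - u"
    using has_coords_superset[OF assms(1) fin] has_coords_superset[OF assms(2) fin]
    by (auto simp: sc_diff left_diff_distrib sum_subtractf)
  then have "t \<in> ?T \<Longrightarrow> c t - d t = 0"
    using pbw_sum_eq_0_imp[OF fin, of "\<lambda>s. c s - d s"] by simp
  then show "c t = d t"
    by (cases "t \<in> ?T") auto
qed

lemma has_coords_add:
  assumes "has_coords c u" "has_coords d v"
  shows "has_coords (\<lambda>t. c t + d t) (u + v)"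
proof -
  let ?T = "{t. c t \<noteq> 0} \<union> {t. d t \<noteq> 0}"
  have fin: "finite ?T"
    using assms by (simp add: has_coords_def)
  show ?thesis
    by (rule has_coordsI[OF fin])
      (use has_coords_superset[OF assms(1) fin] has_coords_superset[OF assms(2) fin] in
        \<open>auto simp: sc_add distrib_right sum.distrib\<close>)
qed

lemma has_coords_scale:
  assumes "has_coords c u"
  shows "has_coords (\<lambda>t. a * c t) (sc a * u)"
  using assms
  by (intro has_coordsI[of "{t. c t \<noteq> 0}"])
    (auto simp: has_coords_def sum_distrib_left sc_mult mult.assoc)

lemma has_coords_pbw: "has_coords (\<lambda>s. if s = t then 1 else 0) (pbw t)"
  by (rule has_coordsI[of "{t}"]) (auto simp: sc_1)

lemma has_coords_exists: "\<exists>c. has_coords c u"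
proof (induction u rule: pbw_induct)
  case 1
  show ?case
    by (rule exI, rule has_coordsI[of "{}"]) auto
next
  case (2 a t u)
  then show ?case
    using has_coords_add[OF has_coords_scale[OF has_coords_pbw]] by blast
qed

definition coords :: "'a \<Rightarrow> nat \<times> nat \<times> nat \<Rightarrow> complex" where
  "coords u = (THE c. has_coords c u)"

lemma has_coords_coords: "has_coords (coords u) u"
  unfolding coords_def using has_coords_exists has_coords_unique by (metis theI)

lemma coords_eqI: "has_coords c u \<Longrightarrow> coords u = c"
  using has_coords_coords has_coords_unique by blast

definition pbw_ext :: "(nat \<times> nat \<times> nat \<Rightarrow> 'a) \<Rightarrow> 'a \<Rightarrow> 'a" where
  "pbw_ext g u = (\<Sum>t | coords u t \<noteq> 0. sc (coords u t) * g t)"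

lemma pbw_ext_superset:
  assumes "has_coords c u" "finite T" "{t. c t \<noteq> 0} \<subseteq> T"
  shows "pbw_ext g u = (\<Sum>t\<in>T. sc (c t) * g t)"
  unfolding pbw_ext_def coords_eqI[OF assms(1)] by (rule sum_coords_superset[OF assms(2,3)])

lemma sc_linear_pbw_ext: "sc_linear sc (pbw_ext g)"
  unfolding sc_linear_def
proof (intro conjI allI)
  fix u v
  let ?T = "{t. coords u t \<noteq> 0} \<union> {t. coords v t \<noteq> 0}"
  have fin: "finite ?T"
    using has_coords_coords[of u] has_coords_coords[of v] by (simp add: has_coords_def)
  have "pbw_ext g (u + v) = (\<Sum>t\<in>?T. sc (coords u t + coords v t) * g t)"
    by (rule pbw_ext_superset[OF has_coords_add[OF has_coords_coords has_coords_coords] fin]) auto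
  also have "\<dots> = (\<Sum>t\<in>?T. sc (coords u t) * g t) + (\<Sum>t\<in>?T. sc (coords v t) * g t)"
    by (simp add: sc_add distrib_right sum.distrib)
  also have "\<dots> = pbw_ext g u + pbw_ext g v"
    by (simp add: pbw_ext_superset[OF has_coords_coords fin])
  finally show "pbw_ext g (u + v) = pbw_ext g u + pbw_ext g v" .
next
  fix a u
  let ?T = "{t. coords u t \<noteq> 0}"
  have fin: "finite ?T"
    using has_coords_coords[of u] by (simp add: has_coords_def)
  have "pbw_ext g (sc a * u) = (\<Sum>t\<in>?T. sc (a * coords u t) * g t)"
    by (rule pbw_ext_superset[OF has_coords_scale[OF has_coords_coords] fin]) auto
  also have "\<dots> = sc a * pbw_ext g u"
    by (simp add: pbw_ext_superset[OF has_coords_coords fin] sc_mult sum_distrib_left mult.assoc)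
  finally show "pbw_ext g (sc a * u) = sc a * pbw_ext g u" .
qed

lemma pbw_ext_pbw: "pbw_ext g (pbw t) = g t"
  using pbw_ext_superset[OF has_coords_pbw, of "{t}"] by (simp add: sc_1)

definition eval_E :: "complex \<Rightarrow> 'a \<Rightarrow> 'a" where
  "eval_E e = pbw_ext (\<lambda>(i, j, k). sc (e ^ k) * (F ^ i * H ^ j))"

lemma sc_linear_eval_E: "sc_linear sc (eval_E e)"
  unfolding eval_E_def by (rule sc_linear_pbw_ext)

lemma eval_E_pbw: "eval_E e (pbw (i, j, k)) = sc (e ^ k) * (F ^ i * H ^ j)"
  unfolding eval_E_def pbw_ext_pbw by simp

lemmas eval_E_add = sc_linear_add[OF sc_linear_eval_E]
  and eval_E_scale = sc_linear_scale[OF sc_linear_eval_E]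
  and eval_E_diff = sc_linear_diff[OF sc_linear_eval_E]

lemma pbw_mult_E_pow: "pbw (i, j, k) * E ^ l = pbw (i, j, k + l)"
  by (simp add: monoFHE_def power_add mult.assoc)

lemma eval_E_mult_E_pow: "eval_E e (u * E ^ l) = sc (e ^ l) * eval_E e u"
proof (rule sc_linear_eq_on_pbw[of "\<lambda>u. eval_E e (u * E ^ l)" "\<lambda>u. sc (e ^ l) * eval_E e u"])
  show "sc_linear sc (\<lambda>u. eval_E e (u * E ^ l))"
    by (rule sc_linear_comp[OF sc_linear_eval_E sc_linear_mult_right])
  show "sc_linear sc (\<lambda>u. sc (e ^ l) * eval_E e u)"
    by (rule sc_linear_comp[OF sc_linear_mult_left sc_linear_eval_E])
  show "eval_E e (pbw t * E ^ l) = sc (e ^ l) * eval_E e (pbw t)" for t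
    by (cases t)
      (simp add: pbw_mult_E_pow eval_E_pbw power_add mult.commute flip: sc_mult mult.assoc)
qed

lemma eval_E_mult_poly_eval: "eval_E e (u * poly_eval sc p E) = sc (poly p e) * eval_E e u"
proof -
  have "u * poly_eval sc p E = (\<Sum>l\<le>degree p. sc (coeff p l) * (u * E ^ l))"
    unfolding poly_eval_def sum_distrib_left by (simp add: mult_sc_left_commute)
  then have "eval_E e (u * poly_eval sc p E)
      = (\<Sum>l\<le>degree p. sc (coeff p l) * (sc (e ^ l) * eval_E e u))"
    by (simp add: sc_linear_sum[OF sc_linear_eval_E] eval_E_scale eval_E_mult_E_pow)
  also have "\<dots> = sc (poly p e) * eval_E e u"
    by (simp add: poly_altdef sc_sum sc_mult sum_distrib_right mult.assoc)
  finally show ?thesis .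
qed

lemma H_mult_F_pow: "H * F ^ i = F ^ i * H - of_nat i * F ^ i"
proof (induction i)
  case (Suc i)
  have HF: "H * F = F * H - F"
    using H_F_commutator by (simp add: algebra_simps eq_neg_iff_add_eq_0)
  have "H * F ^ Suc i = (F ^ i * H - of_nat i * F ^ i) * F"
    by (simp only: power_Suc2 Suc.IH flip: mult.assoc)
  also have "\<dots> = F ^ i * (H * F) - of_nat i * F ^ Suc i"
    by (simp add: algebra_simps power_Suc2 del: power_Suc)
  also have "\<dots> = F ^ Suc i * H - of_nat (Suc i) * F ^ Suc i"
    by (simp add: HF algebra_simps power_Suc2 del: power_Suc)
  finally show ?case .
qed simp

lemma eval_E_mult_F: "eval_E e (F * u) = F * eval_E e u"
proof (rule sc_linear_eq_on_pbw[of "\<lambda>u. eval_E e (F * u)" "\<lambda>u. F * eval_E e u"])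
  show "sc_linear sc (\<lambda>u. eval_E e (F * u))"
    by (rule sc_linear_comp[OF sc_linear_eval_E sc_linear_mult_left])
  show "sc_linear sc (\<lambda>u. F * eval_E e u)"
    by (rule sc_linear_comp[OF sc_linear_mult_left sc_linear_eval_E])
  have "F * pbw (i, j, k) = pbw (Suc i, j, k)" for i j k
    by (simp add: monoFHE_def mult.assoc)
  then show "eval_E e (F * pbw t) = F * eval_E e (pbw t)" for t
    by (cases t) (simp add: eval_E_pbw sc_commute mult.assoc)
qed

lemma eval_E_mult_H: "eval_E e (H * u) = H * eval_E e u"
proof (rule sc_linear_eq_on_pbw[of "\<lambda>u. eval_E e (H * u)" "\<lambda>u. H * eval_E e u"])
  show "sc_linear sc (\<lambda>u. eval_E e (H * u))"
    by (rule sc_linear_comp[OF sc_linear_eval_E sc_linear_mult_left])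
  show "sc_linear sc (\<lambda>u. H * eval_E e u)"
    by (rule sc_linear_comp[OF sc_linear_mult_left sc_linear_eval_E])
  show "eval_E e (H * pbw t) = H * eval_E e (pbw t)" for t
  proof (cases t)
    case (fields i j k)
    have "H * pbw t = pbw (i, Suc j, k) - sc (of_nat i) * pbw (i, j, k)"
      by (simp add: fields monoFHE_def H_mult_F_pow sc_of_nat algebra_simps flip: mult.assoc)
    then have "eval_E e (H * pbw t)
        = sc (e ^ k) * (F ^ i * H ^ Suc j) - sc (of_nat i) * (sc (e ^ k) * (F ^ i * H ^ j))"
      by (simp only: eval_E_diff eval_E_scale eval_E_pbw)
    also have "\<dots> = sc (e ^ k) * ((F ^ i * H - of_nat i * F ^ i) * H ^ j)"
      by (simp add: sc_left_commute algebra_simps del: of_nat_Suc flip: sc_of_nat)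
    also have "\<dots> = H * eval_E e (pbw t)"
      by (simp add: fields eval_E_pbw H_mult_F_pow sc_commute flip: mult.assoc)
    finally show ?thesis .
  qed
qed

lemma gen_subalg_pow: "x \<in> gen_subalg sc S \<Longrightarrow> x ^ n \<in> gen_subalg sc S"
  using gen_subalg.gen_scalar[of sc 1 S]
  by (induction n) (simp_all add: sc_1 gen_subalg.gen_mult)

lemma gen_subalg_sum:
  "(\<And>i. i \<in> A \<Longrightarrow> x i \<in> gen_subalg sc S) \<Longrightarrow> (\<Sum>i\<in>A. x i) \<in> gen_subalg sc S"
  using gen_subalg.gen_scalar[of sc 0 S]
  by (induction A rule: infinite_finite_induct) (simp_all add: sc_0 gen_subalg.gen_add)

lemma eval_E_in_RFH: "eval_E e u \<in> RFH sc F H"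
proof -
  have "sc c * (sc d * (F ^ i * H ^ j)) \<in> gen_subalg sc {F, H}" for c d i j
    by (intro gen_subalg.gen_mult gen_subalg.gen_scalar gen_subalg_pow gen_subalg.gen_base) simp_all
  then show ?thesis
    unfolding eval_E_def pbw_ext_def RFH_def by (auto intro: gen_subalg_sum split: prod.split)
qed

lemma eval_E_mult_left: "p \<in> RFH sc F H \<Longrightarrow> eval_E e (p * u) = p * eval_E e u"
  unfolding RFH_def
proof (induction arbitrary: u rule: gen_subalg.induct)
  case (gen_scalar c)
  show ?case by (rule eval_E_scale)
next
  case (gen_base x)
  then show ?case using eval_E_mult_F eval_E_mult_H by blast
next
  case (gen_add x y)
  then show ?case by (simp add: distrib_right eval_E_add)
next
  case (gen_mult x y)
  then show ?case by (simp add: mult.assoc)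
qed

lemma eval_E_RFH: "p \<in> RFH sc F H \<Longrightarrow> eval_E e p = p"
  using eval_E_mult_left[of p e 1] eval_E_pbw[of e 0 0 0] by (simp add: monoFHE_def sc_1)

lemma eval_E_mult_eval_E: "eval_E e (r * eval_E e y) = eval_E e (r * y)"
proof (rule sc_linear_eq_on_pbw[of "\<lambda>y. eval_E e (r * eval_E e y)" "\<lambda>y. eval_E e (r * y)"])
  show "sc_linear sc (\<lambda>y. eval_E e (r * eval_E e y))"
    by (rule sc_linear_comp[OF sc_linear_eval_E
          sc_linear_comp[OF sc_linear_mult_left sc_linear_eval_E]])
  show "sc_linear sc (\<lambda>y. eval_E e (r * y))"
    by (rule sc_linear_comp[OF sc_linear_eval_E sc_linear_mult_left])
  show "eval_E e (r * eval_E e (pbw t)) = eval_E e (r * pbw t)" for t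
  proof (cases t)
    case (fields i j k)
    have "r * eval_E e (pbw t) = sc (e ^ k) * (r * pbw (i, j, 0))"
      by (simp only: fields eval_E_pbw mult_sc_left_commute) (simp add: monoFHE_def)
    moreover have "r * pbw t = r * pbw (i, j, 0) * E ^ k"
      using pbw_mult_E_pow[of i j 0 k] by (simp add: fields mult.assoc)
    ultimately show ?thesis
      by (simp add: eval_E_scale eval_E_mult_E_pow)
  qed
qed

lemma eval_E_mult_eval_E_center:
  assumes "z \<in> center"
  shows "eval_E e (a * eval_E e z) = eval_E e a * eval_E e z"
proof -
  have commutes: "z * y = y * z" for y
    using assms by (simp add: center_def)
  have "eval_E e (a * eval_E e z) = eval_E e (a * z)"
    by (rule eval_E_mult_eval_E)
  also have "\<dots> = eval_E e (z * eval_E e a)"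
    by (simp only: commutes[of a] eval_E_mult_eval_E)
  also have "\<dots> = eval_E e (eval_E e a * eval_E e z)"
    by (simp only: commutes[of "eval_E e a"] eval_E_mult_eval_E)
  also have "\<dots> = eval_E e a * eval_E e z"
    using eval_E_in_RFH[of e a] eval_E_in_RFH[of e z]
    by (intro eval_E_RFH) (simp add: RFH_def gen_subalg.gen_mult)
  finally show ?thesis .
qed

end

locale Rf_eta = Rf_algebra sc f E F H
  for sc :: "complex \<Rightarrow> 'a::ring_1" and f E F H +
  fixes \<eta> :: "'a \<Rightarrow> complex"
  assumes eta: "is_eta sc E \<eta>"
begin

lemma eta_scalar: "\<eta> (sc c) = c"
  and eta_add: "y \<in> RE sc E \<Longrightarrow> z \<in> RE sc E \<Longrightarrow> \<eta> (y + z) = \<eta> y + \<eta> z"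
  and eta_mult: "y \<in> RE sc E \<Longrightarrow> z \<in> RE sc E \<Longrightarrow> \<eta> (y * z) = \<eta> y * \<eta> z"
  using eta unfolding is_eta_def by blast+

lemma RE_poly_eval: "poly_eval sc p E \<in> RE sc E"
  by (auto simp: RE_def)

lemma RE_scaled_E_pow: "sc c * E ^ n \<in> RE sc E"
  using RE_poly_eval[of "monom c n"] by (simp add: poly_eval_monom)

lemma eta_E_pow: "\<eta> (E ^ n) = \<eta> E ^ n"
proof (induction n)
  case 0
  show ?case using eta_scalar[of 1] by (simp add: sc_1)
next
  case (Suc n)
  then show ?case
    using eta_mult RE_scaled_E_pow[of 1 1] RE_scaled_E_pow[of 1 n] by (simp add: sc_1)
qed

lemma eta_poly_eval: "\<eta> (poly_eval sc p E) = poly p (\<eta> E)"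
proof -
  have "\<eta> (poly_eval sc (\<Sum>i\<in>A. monom (c i) i) E) = (\<Sum>i\<in>A. c i * \<eta> E ^ i)"
    if "finite A" for A c
    using that
  proof (induction A rule: finite_induct)
    case empty
    show ?case using eta_scalar[of 0] by (simp add: poly_eval_def sc_0)
  next
    case (insert i A)
    have "\<eta> (sc (c i) * E ^ i) = c i * \<eta> E ^ i"
      using eta_mult[of "sc (c i)" "E ^ i"] RE_scaled_E_pow[of _ 0] RE_scaled_E_pow[of 1 i]
      by (simp add: eta_scalar eta_E_pow sc_1)
    then show ?case
      using insert eta_add[OF RE_scaled_E_pow RE_poly_eval]
      by (simp add: poly_eval_add poly_eval_monom)
  qed
  from this[of "{..degree p}" "coeff p"] show ?thesis
    by (simp add: poly_as_sum_of_monoms poly_altdef)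
qed

lemma eval_E_mult_RE: "y \<in> RE sc E \<Longrightarrow> eval_E (\<eta> E) (u * y) = sc (\<eta> y) * eval_E (\<eta> E) u"
  by (auto simp: RE_def eval_E_mult_poly_eval eta_poly_eval)

lemma eval_E_R_RetaE: "a \<in> R_RetaE sc E \<eta> \<Longrightarrow> eval_E (\<eta> E) a = 0"
  by (auto simp: R_RetaE_def RetaE_def sc_linear_sum[OF sc_linear_eval_E] eval_E_mult_RE sc_0)

lemma R_RetaE_0: "0 \<in> R_RetaE sc E \<eta>"
  unfolding R_RetaE_def by (rule CollectI, rule exI[of _ 0]) auto

lemma R_RetaE_cons:
  assumes "a \<in> R_RetaE sc E \<eta>" "y \<in> RetaE sc E \<eta>"
  shows "r * y + a \<in> R_RetaE sc E \<eta>"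
proof -
  obtain n :: nat and rs ys
    where a: "a = (\<Sum>i<n. rs i * ys i)" and ys: "\<forall>i<n. ys i \<in> RetaE sc E \<eta>"
    using assms(1) unfolding R_RetaE_def by blast
  have "r * y + a = (\<Sum>i<Suc n. (rs(n := r)) i * (ys(n := y)) i)"
    unfolding a by (simp add: add.commute)
  moreover have "\<forall>i<Suc n. (ys(n := y)) i \<in> RetaE sc E \<eta>"
    using ys assms(2) by auto
  ultimately show ?thesis
    unfolding R_RetaE_def
    by (intro CollectI exI[of _ "Suc n"] exI[of _ "rs(n := r)"] exI[of _ "ys(n := y)"]) simp
qed

lemma E_pow_minus_eta_in_RetaE: "E ^ k - sc (\<eta> E ^ k) \<in> RetaE sc E \<eta>"
proof -
  have "E ^ k - sc (\<eta> E ^ k) = poly_eval sc (monom 1 k + monom (- (\<eta> E ^ k)) 0) E"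
    by (simp add: poly_eval_add poly_eval_monom sc_1 sc_minus)
  then show ?thesis
    unfolding RetaE_def using RE_poly_eval by (simp add: eta_poly_eval poly_monom)
qed

lemma diff_eval_E_in_R_RetaE: "u - eval_E (\<eta> E) u \<in> R_RetaE sc E \<eta>"
proof (induction u rule: pbw_induct)
  case 1
  show ?case using R_RetaE_0 by (simp add: sc_linear_zero[OF sc_linear_eval_E])
next
  case (2 a t u)
  obtain i j k where t: "t = (i, j, k)"
    by (cases t)
  have "eval_E (\<eta> E) (sc a * pbw t + u)
      = sc a * (sc (\<eta> E ^ k) * (F ^ i * H ^ j)) + eval_E (\<eta> E) u"
    by (simp add: t eval_E_add eval_E_scale eval_E_pbw)
  moreover have "sc a * (F ^ i * H ^ j) * sc (\<eta> E ^ k)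
      = sc a * (sc (\<eta> E ^ k) * (F ^ i * H ^ j))"
    by (metis mult.assoc sc_commute)
  ultimately have eq: "sc a * pbw t + u - eval_E (\<eta> E) (sc a * pbw t + u)
      = (sc a * (F ^ i * H ^ j)) * (E ^ k - sc (\<eta> E ^ k)) + (u - eval_E (\<eta> E) u)"
    by (simp add: t monoFHE_def right_diff_distrib mult.assoc)
  show ?case
    unfolding eq by (rule R_RetaE_cons[OF 2 E_pow_minus_eta_in_RetaE])
qed

lemma eta_part_eq_eval_E: "eta_part sc E F H \<eta> u = eval_E (\<eta> E) u"
  unfolding eta_part_def
proof (rule the_equality)
  show "eval_E (\<eta> E) u \<in> RFH sc F H \<and> u - eval_E (\<eta> E) u \<in> R_RetaE sc E \<eta>"
    using eval_E_in_RFH diff_eval_E_in_R_RetaE by blast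
  fix v
  assume v: "v \<in> RFH sc F H \<and> u - v \<in> R_RetaE sc E \<eta>"
  then have "v = eval_E (\<eta> E) u - eval_E (\<eta> E) (u - v)"
    by (simp add: eval_E_RFH eval_E_diff)
  then show "v = eval_E (\<eta> E) u"
    using v eval_E_R_RetaE by simp
qed

lemma eta_part_mult_W_FH:
  assumes "v \<in> W_FH sc E F H \<eta>"
  shows "eta_part sc E F H \<eta> (a * v) = eta_part sc E F H \<eta> a * v"
proof -
  obtain z where "z \<in> center" "v = eval_E (\<eta> E) z"
    using assms by (auto simp: W_FH_def eta_part_eq_eval_E)
  then show ?thesis
    by (simp add: eta_part_eq_eval_E eval_E_mult_eval_E_center)
qed

end

theorem mainTheorem19:
  fixes sc :: "complex \<Rightarrow> 'a::ring_1" and f :: "complex poly" and E F H :: 'a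
    and \<eta> :: "'a \<Rightarrow> complex" and x u v :: 'a
  assumes "is_Rf sc f E F H"
    and "is_eta sc E \<eta>" and "\<eta> E \<noteq> 0"
    and "x \<in> RE sc E" and "u \<in> RFH sc F H" and "v \<in> W_FH sc E F H \<eta>"
  shows "eta_act sc E F H \<eta> x (u * v) = eta_act sc E F H \<eta> x u * v"
proof -
  interpret Rf_eta sc f E F H \<eta>
    using assms(1,2) by unfold_locales
  have "eta_part sc E F H \<eta> (x * (u * v)) = eta_part sc E F H \<eta> (x * u) * v"
    using eta_part_mult_W_FH[OF assms(6), of "x * u"] by (simp add: mult.assoc)
  then show ?thesis
    unfolding eta_act_def by (simp add: left_diff_distrib mult.assoc)
qed

end
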